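(* Let $H$ be obtained from $E_{20}$ by adding a new vertex $v$ and joining it to three distinct vertices of $E_{20}$; let $S$ be the set of these three neighbours. If either every two vertices of $S$ are adjacent in $E_{20}$, or no two vertices of $S$ are adjacent in $E_{20}$, then $H$ contains $K_{3,4}$ or $F_4$ as a minor.
   Context: $E_{20}$ is the graph with vertex set $\{e^0,e^1_1,e^1_2,e^1_3,e^2,e^3_1,e^3_2,e^3_3,e^4\}$ and the 16 edges $e^0e^2$; $e^0e^1_i$ ($i=1,2,3$); $e^1_1e^1_2$, $e^1_2e^1_3$, $e^1_3e^1_1$; and, for $i=1,2,3$, $e^1_ie^3_i$, $e^2e^3_i$, $e^4e^3_i$. $F_4$ is the graph with vertex set $\{f^1,f^2\}\cup\{f^i_j: i\in\{1,2\}, j\in\{1,2,3,4\}\}$ and the 16 edges: for each $i\in\{1,2\}$, $f^if^i_1$, $f^if^i_2$, $f^if^i_4$, $f^i_3f^i_1$, $f^i_3f^i_2$, $f^i_3f^i_4$; and $f^1_jf^2_{5-j}$ for $j=1,2,3,4$. *)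

theory Defs
  imports Main
begin

text \<open>Finite simple graphs are given by a vertex set V and a set E of edges,
each edge being a two-element set of vertices.\<close>

definition induced_connected :: "'a set set \<Rightarrow> 'a set \<Rightarrow> bool" where
  "induced_connected E X \<longleftrightarrow> X \<noteq> {} \<and>
     (\<forall>x\<in>X. \<forall>y\<in>X. (x, y) \<in> {(a, b). a \<in> X \<and> b \<in> X \<and> {a, b} \<in> E}\<^sup>*)"

definition is_minor :: "'b set \<Rightarrow> 'b set set \<Rightarrow> 'a set \<Rightarrow> 'a set set \<Rightarrow> bool" where
  "is_minor VG EG VH EH \<longleftrightarrow> (\<exists>\<phi> :: 'b \<Rightarrow> 'a set.
     (\<forall>u\<in>VG. \<phi> u \<subseteq> VH \<and> induced_connected EH (\<phi> u)) \<and>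
     (\<forall>u\<in>VG. \<forall>w\<in>VG. u \<noteq> w \<longrightarrow> \<phi> u \<inter> \<phi> w = {}) \<and>
     (\<forall>u w. {u, w} \<in> EG \<longrightarrow> u \<noteq> w \<longrightarrow> (\<exists>x\<in>\<phi> u. \<exists>y\<in>\<phi> w. {x, y} \<in> EH)))"

text \<open>The graph E20. E1 i stands for e^1_i, E3 i for e^3_i.\<close>
datatype e20v = E0 | E1 nat | E2 | E3 nat | E4

definition E20_V :: "e20v set" where
  "E20_V = {E0, E2, E4} \<union> E1 ` {1,2,3} \<union> E3 ` {1,2,3}"

definition E20_E :: "e20v set set" where
  "E20_E = {{E0, E2}} \<union> (\<lambda>i. {E0, E1 i}) ` {1,2,3}
     \<union> {{E1 1, E1 2}, {E1 2, E1 3}, {E1 3, E1 1}}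
     \<union> (\<lambda>i. {E1 i, E3 i}) ` {1,2,3} \<union> (\<lambda>i. {E2, E3 i}) ` {1,2,3}
     \<union> (\<lambda>i. {E4, E3 i}) ` {1,2,3}"

text \<open>The graph F4. Fc i stands for f^i, Fs i j for f^i_j.\<close>
datatype f4v = Fc nat | Fs nat nat

definition F4_V :: "f4v set" where
  "F4_V = Fc ` {1,2} \<union> {Fs i j | i j. i \<in> {1,2} \<and> j \<in> {1,2,3,4}}"

definition F4_E :: "f4v set set" where
  "F4_E = (\<Union>i\<in>{1,2::nat}. {{Fc i, Fs i 1}, {Fc i, Fs i 2}, {Fc i, Fs i 4},
                          {Fs i 3, Fs i 1}, {Fs i 3, Fs i 2}, {Fs i 3, Fs i 4}})
     \<union> (\<lambda>j. {Fs 1 j, Fs 2 (5 - j)}) ` {1,2,3,4}"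

definition K34_V :: "(nat + nat) set" where
  "K34_V = Inl ` {0..<3} \<union> Inr ` {0..<4}"

definition K34_E :: "(nat + nat) set set" where
  "K34_E = {{Inl i, Inr j} | i j. i < 3 \<and> j < 4}"

text \<open>H: E20 plus a new vertex (None) joined to the vertices of S.
Original vertices x are embedded as Some x.\<close>
definition H_V :: "e20v option set" where
  "H_V = insert None (Some ` E20_V)"

definition H_E :: "e20v set \<Rightarrow> e20v option set set" where
  "H_E S = (\<lambda>e. Some ` e) ` E20_E \<union> (\<lambda>s. {None, Some s}) ` S"

end

theory Submission
  imports Defs "HOL-Combinatorics.Transposition"
begin

text \<open>Permuting the indices 1, 2, 3 is a symmetry of E20, and up to this symmetry a triangle or
an independent 3-set S of E20 is one of six triples. For S = {e^0, e^1_2, e^1_3} the graph H contains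
F4 as a subgraph. In each of the other five cases E20 has a K_{3,3} minor in which every branch set
on one side meets S; the new vertex v then forms a fourth branch set on the other side, which gives
a K_{3,4} minor of H.\<close>

lemma induced_connected_singleton [simp]: "induced_connected E {x}"
  by (simp add: induced_connected_def)

lemma induced_connected_insert:
  assumes "induced_connected E X" and "\<exists>y\<in>X. {x, y} \<in> E"
  shows "induced_connected E (insert x X)"
proof -
  let ?R = "\<lambda>X. {(a, b). a \<in> X \<and> b \<in> X \<and> {a, b} \<in> E}"
  obtain y where y: "y \<in> X" "{x, y} \<in> E"
    using assms(2) by blast
  have sub: "(?R X)\<^sup>* \<subseteq> (?R (insert x X))\<^sup>*"
    by (rule rtrancl_mono) blast
  have "(x, y) \<in> (?R (insert x X))\<^sup>*" "(y, x) \<in> (?R (insert x X))\<^sup>*"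
    using y by (auto simp: insert_commute)
  moreover have "(u, v) \<in> (?R (insert x X))\<^sup>*" if "u \<in> X" "v \<in> X" for u v
    using assms(1) that sub unfolding induced_connected_def by blast
  ultimately show ?thesis
    unfolding induced_connected_def
    by (metis (no_types, lifting) insert_iff insert_not_empty rtrancl.rtrancl_refl rtrancl_trans y(1))
qed

lemma induced_connected_mono:
  assumes "induced_connected E X" and "E \<subseteq> E'"
  shows "induced_connected E' X"
proof -
  have "{(a, b). a \<in> X \<and> b \<in> X \<and> {a, b} \<in> E}\<^sup>* \<subseteq> {(a, b). a \<in> X \<and> b \<in> X \<and> {a, b} \<in> E'}\<^sup>*"
    using assms(2) by (intro rtrancl_mono) blast
  then show ?thesis
    using assms(1) unfolding induced_connected_def by blast
qed

lemma induced_connected_image: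
  assumes "induced_connected E X"
  shows "induced_connected ((`) f ` E) (f ` X)"
proof -
  let ?R = "{(a, b). a \<in> X \<and> b \<in> X \<and> {a, b} \<in> E}"
  let ?R' = "{(a, b). a \<in> f ` X \<and> b \<in> f ` X \<and> {a, b} \<in> (`) f ` E}"
  have "(f u, f v) \<in> ?R'\<^sup>*" if "(u, v) \<in> ?R\<^sup>*" for u v
    using that
  proof (induction rule: rtrancl_induct)
    case (step v w)
    then have "(f v, f w) \<in> ?R'"
      by (auto intro: rev_image_eqI)
    with step.IH show ?case
      by (rule rtrancl_into_rtrancl)
  qed simp
  then show ?thesis
    using assms unfolding induced_connected_def by blast
qed

lemma is_minor_image:
  assumes "is_minor VG EG VH EH" and "inj_on f VH"
  shows "is_minor VG EG (f ` VH) ((`) f ` EH)"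
proof -
  obtain \<phi> where \<phi>: "\<forall>u\<in>VG. \<phi> u \<subseteq> VH \<and> induced_connected EH (\<phi> u)"
      "\<forall>u\<in>VG. \<forall>w\<in>VG. u \<noteq> w \<longrightarrow> \<phi> u \<inter> \<phi> w = {}"
      "\<forall>u w. {u, w} \<in> EG \<longrightarrow> u \<noteq> w \<longrightarrow> (\<exists>x\<in>\<phi> u. \<exists>y\<in>\<phi> w. {x, y} \<in> EH)"
    using assms(1) unfolding is_minor_def by blast
  show ?thesis
    unfolding is_minor_def
  proof (intro exI[of _ "\<lambda>u. f ` \<phi> u"] conjI)
    show "\<forall>u\<in>VG. f ` \<phi> u \<subseteq> f ` VH \<and> induced_connected ((`) f ` EH) (f ` \<phi> u)"
      using \<phi>(1) by (simp add: image_mono induced_connected_image)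
    show "\<forall>u\<in>VG. \<forall>w\<in>VG. u \<noteq> w \<longrightarrow> f ` \<phi> u \<inter> f ` \<phi> w = {}"
    proof (intro ballI impI)
      fix u w
      assume "u \<in> VG" "w \<in> VG" "u \<noteq> w"
      then show "f ` \<phi> u \<inter> f ` \<phi> w = {}"
        using \<phi>(1,2) inj_on_image_Int[OF assms(2), of "\<phi> u" "\<phi> w"] by auto
    qed
    show "\<forall>u w. {u, w} \<in> EG \<longrightarrow> u \<noteq> w \<longrightarrow>
        (\<exists>x\<in>f ` \<phi> u. \<exists>y\<in>f ` \<phi> w. {x, y} \<in> (`) f ` EH)"
    proof (intro allI impI)
      fix u w
      assume "{u, w} \<in> EG" "u \<noteq> w"
      then obtain x y where "x \<in> \<phi> u" "y \<in> \<phi> w" "{x, y} \<in> EH"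
        using \<phi>(3) by blast
      then show "\<exists>x\<in>f ` \<phi> u. \<exists>y\<in>f ` \<phi> w. {x, y} \<in> (`) f ` EH"
        by (intro bexI[of _ "f x"] bexI[of _ "f y"] image_eqI[of _ _ "{x, y}"]) auto
    qed
  qed
qed

lemma subgraph_is_minor:
  assumes "inj_on f VG" and "f ` VG \<subseteq> VH" and "(`) f ` EG \<subseteq> EH"
  shows "is_minor VG EG VH EH"
  unfolding is_minor_def
proof (intro exI[of _ "\<lambda>u. {f u}"] conjI)
  show "\<forall>u\<in>VG. \<forall>w\<in>VG. u \<noteq> w \<longrightarrow> {f u} \<inter> {f w} = {}"
    using assms(1) by (auto simp: inj_on_def)
  show "\<forall>u w. {u, w} \<in> EG \<longrightarrow> u \<noteq> w \<longrightarrow> (\<exists>x\<in>{f u}. \<exists>y\<in>{f w}. {x, y} \<in> EH)"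
    using assms(3) by auto
qed (use assms(2) in auto)

lemma sorted_wrt_disjnt_nth:
  assumes "sorted_wrt disjnt xs" "i < length xs" "j < length xs" "i \<noteq> j"
  shows "disjnt (xs ! i) (xs ! j)"
  using assms by (metis disjnt_sym linorder_neqE_nat sorted_wrt_nth_less)

lemma K34_minorI:
  assumes "length As = 3" and "length Bs = 4"
    and "\<forall>X\<in>set (As @ Bs). X \<subseteq> VH \<and> induced_connected EH X"
    and "sorted_wrt disjnt (As @ Bs)"
    and "\<forall>A\<in>set As. \<forall>B\<in>set Bs. \<exists>x\<in>A. \<exists>y\<in>B. {x, y} \<in> EH"
  shows "is_minor K34_V K34_E VH EH"
proof -
  let ?idx = "case_sum (\<lambda>i. i) (\<lambda>j. 3 + j)"
  let ?\<phi> = "\<lambda>u. (As @ Bs) ! ?idx u"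
  have idx: "?idx u < 7" if "u \<in> K34_V" for u
    using that by (auto simp: K34_V_def)
  have "length (As @ Bs) = 7"
    using assms(1,2) by simp
  then have "?\<phi> u \<in> set (As @ Bs)" if "u \<in> K34_V" for u
    using idx(1)[OF that] by (metis nth_mem)
  then have "\<forall>u\<in>K34_V. ?\<phi> u \<subseteq> VH \<and> induced_connected EH (?\<phi> u)"
    using assms(3) by blast
  moreover have "?\<phi> u \<inter> ?\<phi> w = {}" if "u \<in> K34_V" "w \<in> K34_V" "u \<noteq> w" for u w
  proof -
    have "?idx u \<noteq> ?idx w"
      using that by (auto simp: K34_V_def)
    then show ?thesis
      using sorted_wrt_disjnt_nth[OF assms(4)] idx(1) that assms(1,2) by (simp add: disjnt_def)
  qed
  moreover have "\<exists>x\<in>?\<phi> u. \<exists>y\<in>?\<phi> w. {x, y} \<in> EH" if edge: "{u, w} \<in> K34_E" for u w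
  proof -
    obtain i j where ij: "i < 3" "j < 4" "{u, w} = {Inl i, Inr j}"
      using edge unfolding K34_E_def by blast
    have "As ! i \<in> set As" "Bs ! j \<in> set Bs"
      using ij(1,2) assms(1,2) by simp_all
    then obtain x y where "x \<in> As ! i" "y \<in> Bs ! j" "{x, y} \<in> EH"
      using assms(5) by blast
    then have xy: "x \<in> ?\<phi> (Inl i)" "y \<in> ?\<phi> (Inr j)" "{x, y} \<in> EH" "{y, x} \<in> EH"
      using assms(1) ij(1) by (simp_all add: nth_append insert_commute)
    have "(u = Inl i \<and> w = Inr j) \<or> (u = Inr j \<and> w = Inl i)"
      using ij(3) by (auto simp: doubleton_eq_iff)
    then show ?thesis
      using xy by (elim disjE conjE) auto
  qed
  ultimately show ?thesis
    unfolding is_minor_def by (intro exI[of _ ?\<phi>] conjI) auto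
qed

lemma E20_V_eq: "E20_V = {E0, E1 1, E1 2, E1 3, E2, E3 1, E3 2, E3 3, E4}"
  by (auto simp: E20_V_def)

lemma E20_E_eq: "E20_E = {{E0, E2}, {E0, E1 1}, {E0, E1 2}, {E0, E1 3},
    {E1 1, E1 2}, {E1 2, E1 3}, {E1 3, E1 1}, {E1 1, E3 1}, {E1 2, E3 2}, {E1 3, E3 3},
    {E2, E3 1}, {E2, E3 2}, {E2, E3 3}, {E4, E3 1}, {E4, E3 2}, {E4, E3 3}}"
  by (auto simp: E20_E_def)

fun E20_neighbours :: "e20v \<Rightarrow> e20v set" where
  "E20_neighbours E0 = {E2, E1 1, E1 2, E1 3}"
| "E20_neighbours (E1 i) = {E0, E3 i} \<union> E1 ` ({1, 2, 3} - {i})"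
| "E20_neighbours E2 = {E0, E3 1, E3 2, E3 3}"
| "E20_neighbours (E3 i) = {E1 i, E2, E4}"
| "E20_neighbours E4 = {E3 1, E3 2, E3 3}"

lemma E20_edge_iff: "x \<in> E20_V \<Longrightarrow> {x, y} \<in> E20_E \<longleftrightarrow> y \<in> E20_neighbours x"
  unfolding E20_V_eq E20_E_eq by (elim insertE emptyE) (auto simp: doubleton_eq_iff)

fun permute_index :: "(nat \<Rightarrow> nat) \<Rightarrow> e20v \<Rightarrow> e20v" where
  "permute_index p (E1 i) = E1 (p i)"
| "permute_index p (E3 i) = E3 (p i)"
| "permute_index p v = v"

lemma inj_permute_index:
  assumes "inj p"
  shows "inj (permute_index p)"
proof (rule injI)
  fix x y
  assume "permute_index p x = permute_index p y"
  then show "x = y"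
    using assms by (cases x; cases y) (auto dest: injD)
qed

lemma E20_V_transpose: "k \<in> {1, 2, 3} \<Longrightarrow> permute_index (transpose 1 k) ` E20_V = E20_V"
  unfolding E20_V_eq by (elim insertE emptyE) (simp_all add: insert_commute)

lemma E20_E_transpose: "k \<in> {1, 2, 3} \<Longrightarrow> (`) (permute_index (transpose 1 k)) ` E20_E = E20_E"
  unfolding E20_E_eq by (elim insertE emptyE) (simp_all add: insert_commute)

lemma Some_edge_H_E_iff [simp]: "{Some x, Some y} \<in> H_E S \<longleftrightarrow> {x, y} \<in> E20_E"
proof -
  have "inj ((`) Some)"
    by (simp add: inj_on_image)
  then have "Some ` {x, y} \<in> (`) Some ` E20_E \<longleftrightarrow> {x, y} \<in> E20_E"
    by (rule inj_image_mem_iff)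
  then show ?thesis
    by (auto simp: H_E_def)
qed

lemma apex_edge_H_E_iff [simp]: "{None, Some s} \<in> H_E S \<longleftrightarrow> s \<in> S"
proof -
  have "None \<notin> X" if "X \<in> (`) Some ` E20_E" for X
    using that by auto
  then have "{None, Some s} \<notin> (`) Some ` E20_E"
    by blast
  moreover have "{None, Some s} = {None, Some t} \<longleftrightarrow> s = t" for t
    by (simp add: doubleton_eq_iff)
  ultimately show ?thesis
    unfolding H_E_def Un_iff image_iff by auto
qed

lemma H_V_image:
  assumes "\<sigma> ` E20_V = E20_V"
  shows "map_option \<sigma> ` H_V = H_V"
proof -
  have "map_option \<sigma> ` H_V = insert None (Some ` \<sigma> ` E20_V)"
    by (simp add: H_V_def image_image)
  then show ?thesis
    using assms by (simp add: H_V_def)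
qed

lemma H_E_image:
  assumes "(`) \<sigma> ` E20_E = E20_E"
  shows "(`) (map_option \<sigma>) ` H_E S = H_E (\<sigma> ` S)"
proof -
  have "(`) (map_option \<sigma>) ` H_E S = (`) Some ` (`) \<sigma> ` E20_E \<union> (\<lambda>s. {None, Some s}) ` \<sigma> ` S"
    by (simp add: H_E_def image_Un image_image)
  then show ?thesis
    using assms by (simp add: H_E_def)
qed

lemma is_minor_H_transpose:
  assumes "is_minor VG EG H_V (H_E S)" and "k \<in> {1, 2, 3}"
  shows "is_minor VG EG H_V (H_E (permute_index (transpose 1 k) ` S))"
proof -
  let ?\<sigma> = "permute_index (transpose 1 k)"
  have "inj (map_option ?\<sigma>)"
    by (simp add: inj_permute_index option.inj_map)
  then have "is_minor VG EG (map_option ?\<sigma> ` H_V) ((`) (map_option ?\<sigma>) ` H_E S)"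
    using assms(1) by (simp add: is_minor_image inj_on_subset)
  then show ?thesis
    using H_V_image[OF E20_V_transpose] H_E_image[OF E20_E_transpose] assms(2) by simp
qed

lemma disjnt_image_Some_iff: "disjnt (Some ` A) (Some ` B) \<longleftrightarrow> disjnt A B"
  by (auto simp: disjnt_def)

lemma K34_minor_apexI:
  assumes "length As = 3" and "length Bs = 3"
    and "\<forall>X\<in>set (As @ Bs). X \<subseteq> E20_V \<and> induced_connected E20_E X"
    and "sorted_wrt disjnt (As @ Bs)"
    and "\<forall>A\<in>set As. \<forall>B\<in>set Bs. \<exists>x\<in>A. \<exists>y\<in>B. {x, y} \<in> E20_E"
    and "\<forall>A\<in>set As. A \<inter> S \<noteq> {}"
  shows "is_minor K34_V K34_E H_V (H_E S)"
proof (rule K34_minorI[where As = "map ((`) Some) As" and Bs = "map ((`) Some) Bs @ [{None}]"])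
  show "length (map ((`) Some) As) = 3" "length (map ((`) Some) Bs @ [{None}]) = 4"
    using assms(1,2) by simp_all
  have "Some ` X \<subseteq> H_V \<and> induced_connected (H_E S) (Some ` X)" if "X \<in> set (As @ Bs)" for X
  proof
    have X: "X \<subseteq> E20_V" "induced_connected E20_E X"
      using assms(3) that by auto
    then show "Some ` X \<subseteq> H_V"
      by (auto simp: H_V_def)
    have "(`) Some ` E20_E \<subseteq> H_E S"
      by (auto simp: H_E_def)
    with X(2) show "induced_connected (H_E S) (Some ` X)"
      by (blast intro: induced_connected_mono induced_connected_image)
  qed
  then show "\<forall>X\<in>set (map ((`) Some) As @ map ((`) Some) Bs @ [{None}]).
      X \<subseteq> H_V \<and> induced_connected (H_E S) X"
    by (auto simp: H_V_def)
  have "sorted_wrt disjnt (map ((`) Some) (As @ Bs))"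
    using assms(4) by (simp only: sorted_wrt_map disjnt_image_Some_iff)
  then show "sorted_wrt disjnt (map ((`) Some) As @ map ((`) Some) Bs @ [{None}])"
    by (simp add: sorted_wrt_append disjnt_def)
  show "\<forall>A\<in>set (map ((`) Some) As). \<forall>B\<in>set (map ((`) Some) Bs @ [{None}]).
      \<exists>x\<in>A. \<exists>y\<in>B. {x, y} \<in> H_E S"
    using assms(5,6) by (fastforce simp: insert_commute)
qed

lemma F4_V_eq: "F4_V = {Fc 1, Fc 2, Fs 1 1, Fs 1 2, Fs 1 3, Fs 1 4, Fs 2 1, Fs 2 2, Fs 2 3, Fs 2 4}"
  by (auto simp: F4_V_def)

lemma F4_E_eq: "F4_E = {{Fc 1, Fs 1 1}, {Fc 1, Fs 1 2}, {Fc 1, Fs 1 4},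
    {Fs 1 3, Fs 1 1}, {Fs 1 3, Fs 1 2}, {Fs 1 3, Fs 1 4},
    {Fc 2, Fs 2 1}, {Fc 2, Fs 2 2}, {Fc 2, Fs 2 4},
    {Fs 2 3, Fs 2 1}, {Fs 2 3, Fs 2 2}, {Fs 2 3, Fs 2 4},
    {Fs 1 1, Fs 2 4}, {Fs 1 2, Fs 2 3}, {Fs 1 3, Fs 2 2}, {Fs 1 4, Fs 2 1}}"
  by (auto simp: F4_E_def)

lemma F4_minor_apex_E0_E12_E13: "is_minor F4_V F4_E H_V (H_E {E0, E1 2, E1 3})"
proof (rule subgraph_is_minor[where f = "case_f4v (\<lambda>i. [Some E4, None] ! (i - 1))
    (\<lambda>i j. [[Some (E3 2), Some (E3 1), Some E2, Some (E3 3)],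
            [Some (E1 3), Some E0, Some (E1 1), Some (E1 2)]] ! (i - 1) ! (j - 1))"])
qed (simp_all add: F4_V_eq F4_E_eq H_V_def E20_V_eq E20_edge_iff)

lemma K34_minor_apex_E11_E12_E13: "is_minor K34_V K34_E H_V (H_E {E1 1, E1 2, E1 3})"
  by (rule K34_minor_apexI[where As = "[{E1 1, E3 1}, {E1 2, E3 2}, {E1 3, E3 3}]"
        and Bs = "[{E0}, {E2}, {E4}]"])
    (simp_all add: E20_V_eq E20_edge_iff induced_connected_insert disjnt_def)

lemma K34_minor_apex_E0_E32_E33: "is_minor K34_V K34_E H_V (H_E {E0, E3 2, E3 3})"
  by (rule K34_minor_apexI[where As = "[{E0}, {E1 2, E3 2}, {E3 1, E4, E3 3}]"
        and Bs = "[{E1 1}, {E1 3}, {E2}]"])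
    (simp_all add: E20_V_eq E20_edge_iff induced_connected_insert disjnt_def)

lemma K34_minor_apex_E11_E2_E4: "is_minor K34_V K34_E H_V (H_E {E1 1, E2, E4})"
  by (rule K34_minor_apexI[where As = "[{E1 1}, {E2}, {E4}]"
        and Bs = "[{E3 1}, {E1 2, E3 2}, {E1 3, E3 3}]"])
    (simp_all add: E20_V_eq E20_edge_iff induced_connected_insert disjnt_def)

lemma K34_minor_apex_E11_E32_E33: "is_minor K34_V K34_E H_V (H_E {E1 1, E3 2, E3 3})"
  by (rule K34_minor_apexI[where As = "[{E1 1, E3 1}, {E3 2}, {E1 3, E3 3}]"
        and Bs = "[{E1 2}, {E2}, {E4}]"])
    (simp_all add: E20_V_eq E20_edge_iff induced_connected_insert disjnt_def)

lemma K34_minor_apex_E31_E32_E33: "is_minor K34_V K34_E H_V (H_E {E3 1, E3 2, E3 3})"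
  by (rule K34_minor_apexI[where As = "[{E3 1}, {E1 2, E3 2}, {E1 3, E3 3}]"
        and Bs = "[{E1 1}, {E2}, {E4}]"])
    (simp_all add: E20_V_eq E20_edge_iff induced_connected_insert disjnt_def)

definition E20_triple_representatives :: "e20v set set" where
  "E20_triple_representatives = {{E0, E1 2, E1 3}, {E1 1, E1 2, E1 3}, {E0, E3 2, E3 3},
     {E1 1, E2, E4}, {E1 1, E3 2, E3 3}, {E3 1, E3 2, E3 3}}"

definition E20_homogeneous_triples :: "e20v set set" where
  "E20_homogeneous_triples = {{E0, E1 2, E1 3}, {E0, E1 1, E1 3}, {E0, E1 1, E1 2},
     {E1 1, E1 2, E1 3}, {E0, E3 2, E3 3}, {E0, E3 1, E3 3}, {E0, E3 1, E3 2},
     {E1 1, E2, E4}, {E1 2, E2, E4}, {E1 3, E2, E4},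
     {E1 1, E3 2, E3 3}, {E1 2, E3 1, E3 3}, {E1 3, E3 1, E3 2}, {E3 1, E3 2, E3 3}}"

lemma E20_homogeneous_triples_orbits:
  "E20_homogeneous_triples =
     (\<lambda>(k, R). permute_index (transpose 1 k) ` R) ` ({1, 2, 3} \<times> E20_triple_representatives)"
  by (simp add: E20_homogeneous_triples_def E20_triple_representatives_def insert_commute)

lemma E20_homogeneous_triple_cases:
  assumes "S \<subseteq> E20_V" and "card S = 3"
    and "(\<forall>x\<in>S. \<forall>y\<in>S. x \<noteq> y \<longrightarrow> {x, y} \<in> E20_E) \<or>
         (\<forall>x\<in>S. \<forall>y\<in>S. x \<noteq> y \<longrightarrow> {x, y} \<notin> E20_E)"
  shows "S \<in> E20_homogeneous_triples"
proof -
  obtain a b c where S: "S = {a, b, c}" and distinct: "a \<noteq> b" "b \<noteq> c" "a \<noteq> c"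
    using assms(2) unfolding card_3_iff by blast
  have "a \<in> S" "b \<in> S" "c \<in> S"
    by (simp_all add: S)
  then have homogeneous: "({a, b} \<in> E20_E \<and> {a, c} \<in> E20_E \<and> {b, c} \<in> E20_E) \<or>
      ({a, b} \<notin> E20_E \<and> {a, c} \<notin> E20_E \<and> {b, c} \<notin> E20_E)"
    using assms(3) distinct by blast
  have "a \<in> E20_V" "b \<in> E20_V" "c \<in> E20_V"
    using assms(1) S by auto
  then show ?thesis
    unfolding S E20_V_eq insert_iff empty_iff
    by (elim disjE; use distinct homogeneous in \<open>simp add: E20_edge_iff E20_V_eq image_iff\<close>)
      (simp_all add: E20_homogeneous_triples_def insert_commute)
qed

theorem lemma4p5:
  fixes S :: "e20v set"
  assumes "S \<subseteq> E20_V" and "card S = 3"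
    and "(\<forall>x\<in>S. \<forall>y\<in>S. x \<noteq> y \<longrightarrow> {x, y} \<in> E20_E) \<or>
         (\<forall>x\<in>S. \<forall>y\<in>S. x \<noteq> y \<longrightarrow> {x, y} \<notin> E20_E)"
  shows "is_minor K34_V K34_E H_V (H_E S) \<or> is_minor F4_V F4_E H_V (H_E S)"
proof -
  obtain k R where k: "k \<in> {1, 2, 3}" and R: "R \<in> E20_triple_representatives"
    and S: "S = permute_index (transpose 1 k) ` R"
    using E20_homogeneous_triple_cases[OF assms] unfolding E20_homogeneous_triples_orbits by blast
  have "is_minor K34_V K34_E H_V (H_E R) \<or> is_minor F4_V F4_E H_V (H_E R)"
    using R F4_minor_apex_E0_E12_E13 K34_minor_apex_E11_E12_E13 K34_minor_apex_E0_E32_E33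
      K34_minor_apex_E11_E2_E4 K34_minor_apex_E11_E32_E33 K34_minor_apex_E31_E32_E33
    by (auto simp: E20_triple_representatives_def)
  then show ?thesis
    unfolding S
    using is_minor_H_transpose[OF _ k, of K34_V K34_E R] is_minor_H_transpose[OF _ k, of F4_V F4_E R]
    by blast
qed

end
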